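(* Let $n\ge 1$, $q\in\mathbb{C}^\times$, and let $\mathcal A$ be an associative unital algebra containing mutually commuting elements $\lambda_1,\dots,\lambda_n$ such that all differences $\lambda_i-\lambda_k$ ($i\neq k$) are invertible, and mutually commuting invertible elements $\mu_1,\dots,\mu_n$, satisfying $$\mu_j\lambda_j=q\,\lambda_j\mu_j,\qquad \mu_j\lambda_i=\lambda_i\mu_j\quad(i\neq j).$$ With $S_i(\lambda)=\prod_{k\neq i}(\lambda-\lambda_k)/\prod_{k\neq i}(\lambda_i-\lambda_k)$, define for $\lambda\in\mathbb{C}$ $$2P(\lambda)=\Big(\lambda+\sum_{i=1}^n\lambda_i\Big)\prod_{i=1}^n(\lambda-\lambda_i)+\sum_{i=1}^n S_i(\lambda)\,(\mu_i+\mu_i^{-1}),$$ (with functions of the $\lambda_k$ to the left of $\mu_i^{\pm1}$). Then $[P(\lambda),P(\lambda')]=0$ for all $\lambda,\lambda'\in\mathbb{C}$.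
   Context: $2P(\lambda)$ is the polynomial of degree $n+1$ with leading term $\lambda^{n+1}$ and no $\lambda^n$ term (center-of-mass frame) that solves the quantum Baxter equations $2P(\lambda_i)=\mu_i+\mu_i^{-1}$ associated with the Toda chain spectral curve $\mu+\mu^{-1}=2P(\lambda)$. *)

theory Defs
  imports Complex_Main
begin

definition ring_inv :: "'a::ring_1 \<Rightarrow> 'a" where
  "ring_inv x = (THE y. x * y = 1 \<and> y * x = 1)"

definition invertible_el :: "'a::ring_1 \<Rightarrow> bool" where
  "invertible_el x \<longleftrightarrow> (\<exists>y. x * y = 1 \<and> y * x = 1)"

text \<open>A unital associative complex algebra is modelled as a ring_1 type together
  with a unital ring homomorphism sc from the complex numbers into its centre.\<close>
definition central_scalar_hom :: "(complex \<Rightarrow> 'a::ring_1) \<Rightarrow> bool" where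
  "central_scalar_hom sc \<longleftrightarrow> sc 1 = 1 \<and> (\<forall>x y. sc (x + y) = sc x + sc y)
     \<and> (\<forall>x y. sc (x * y) = sc x * sc y) \<and> (\<forall>x a. sc x * a = a * sc x)"

definition S_poly :: "(complex \<Rightarrow> 'a::ring_1) \<Rightarrow> nat \<Rightarrow> (nat \<Rightarrow> 'a) \<Rightarrow> nat \<Rightarrow> complex \<Rightarrow> 'a" where
  "S_poly sc n lam i z =
     prod_list (map (\<lambda>k. sc z - lam k) (filter (\<lambda>k. k \<noteq> i) [0..<n]))
     * ring_inv (prod_list (map (\<lambda>k. lam i - lam k) (filter (\<lambda>k. k \<noteq> i) [0..<n])))"

definition P_op :: "(complex \<Rightarrow> 'a::ring_1) \<Rightarrow> nat \<Rightarrow> (nat \<Rightarrow> 'a) \<Rightarrow> (nat \<Rightarrow> 'a) \<Rightarrow> complex \<Rightarrow> 'a" where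
  "P_op sc n lam mu z = sc (1/2) *
     ((sc z + (\<Sum>i<n. lam i)) * prod_list (map (\<lambda>i. sc z - lam i) [0..<n])
      + (\<Sum>i<n. S_poly sc n lam i z * (mu i + ring_inv (mu i))))"

end

theory Submission
  imports Defs
begin

text \<open>
  All coefficients of 2P (polynomials in the nodes \<open>\<lambda>\<^sub>k\<close>, scalars, and inverses of differences
  of nodes) lie in the double commutant of the nodes, a commutative subalgebra closed under
  inverses, and conjugation by \<open>\<mu>\<^sub>i\<close> or its inverse acts on it by rescaling \<open>\<lambda>\<^sub>i\<close> by \<open>q\<close> or
  \<open>1/q\<close>. Write 2P(z) as F(z) plus a sum of terms \<open>S\<^sub>i(z) m\<close> with \<open>m\<close> one of \<open>\<mu>\<^sub>i\<close>, \<open>\<mu>\<^sub>i\<^sup>-\<^sup>1\<close>.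
  Moving every \<open>m\<close> to the right reduces the commutativity of 2P(z) and 2P(w) to the symmetry
  in (z, w) of \<open>S\<^sub>i(z) S\<^sub>j'(w) + S\<^sub>j(z) S\<^sub>i''(w)\<close> and of \<open>F(z) S\<^sub>i(w) + S\<^sub>i(z) F'(w)\<close>, where the
  primes mean that \<open>\<lambda>\<^sub>i\<close> resp. \<open>\<lambda>\<^sub>j\<close> is rescaled. For \<open>i \<noteq> j\<close> the antisymmetric part of each
  summand of the first expression is (z - w) times one and the same factor, up to sign.
  The second is symmetric because \<open>(z + \<lambda>\<^sub>i + t)(z - \<lambda>\<^sub>i) - (w + \<lambda>\<^sub>i + t)(w - \<lambda>\<^sub>i)\<close> does not
  depend on \<open>\<lambda>\<^sub>i\<close>; this is where the summand \<open>\<Sum>\<^sub>k \<lambda>\<^sub>k\<close> of the linear factor of F is needed.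
\<close>

section \<open>Two-sided inverses\<close>

lemma ring_inv_unique:
  fixes x y :: "'a::ring_1"
  assumes "x * y = 1" "y * x = 1"
  shows "ring_inv x = y"
  unfolding ring_inv_def
proof (rule the_equality)
  show "x * y = 1 \<and> y * x = 1" using assms by simp
  fix y' assume y': "x * y' = 1 \<and> y' * x = 1"
  then have "y' = y' * (x * y)" using assms by simp
  also have "\<dots> = y" using y' by (simp flip: mult.assoc)
  finally show "y' = y" .
qed

lemma invertible_elI: "(x::'a::ring_1) * y = 1 \<Longrightarrow> y * x = 1 \<Longrightarrow> invertible_el x"
  unfolding invertible_el_def by blast

lemma
  fixes x :: "'a::ring_1"
  assumes "invertible_el x"
  shows right_ring_inv: "x * ring_inv x = 1" and left_ring_inv: "ring_inv x * x = 1"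
proof -
  from assms obtain y where "x * y = 1" "y * x = 1" unfolding invertible_el_def by blast
  moreover from this have "ring_inv x = y" by (rule ring_inv_unique)
  ultimately show "x * ring_inv x = 1" "ring_inv x * x = 1" by simp_all
qed

lemma
  fixes x :: "'a::ring_1"
  assumes "invertible_el x"
  shows mult_ring_inv_cancel: "x * (ring_inv x * a) = a"
    and ring_inv_mult_cancel: "ring_inv x * (x * a) = a"
  using assms by (simp_all add: right_ring_inv left_ring_inv flip: mult.assoc)

lemma invertible_el_ring_inv: "invertible_el x \<Longrightarrow> invertible_el (ring_inv x)"
  by (metis invertible_elI left_ring_inv right_ring_inv)

lemma ring_inv_commute:
  fixes x y :: "'a::ring_1"
  assumes "invertible_el y" "x * y = y * x"
  shows "x * ring_inv y = ring_inv y * x"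
proof -
  let ?v = "ring_inv y"
  have "x * ?v = ?v * (y * x) * ?v" using assms(1) by (simp add: left_ring_inv flip: mult.assoc)
  also have "\<dots> = ?v * x * (y * ?v)" by (metis assms(2) mult.assoc)
  also have "\<dots> = ?v * x" using assms(1) by (simp add: right_ring_inv)
  finally show ?thesis .
qed

lemma
  fixes x y :: "'a::ring_1"
  assumes "invertible_el x" "invertible_el y"
  shows invertible_el_mult: "invertible_el (x * y)"
    and ring_inv_mult: "ring_inv (x * y) = ring_inv y * ring_inv x"
proof -
  have "(x * y) * (ring_inv y * ring_inv x) = 1" "(ring_inv y * ring_inv x) * (x * y) = 1"
    using assms
    by (simp_all add: mult.assoc right_ring_inv left_ring_inv
        mult_ring_inv_cancel ring_inv_mult_cancel)
  then show "invertible_el (x * y)" "ring_inv (x * y) = ring_inv y * ring_inv x"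
    by (auto intro: invertible_elI ring_inv_unique)
qed

lemma invertible_el_prod_list:
  "(\<And>k. k \<in> set xs \<Longrightarrow> invertible_el (f k)) \<Longrightarrow> invertible_el (prod_list (map f xs))"
  by (induction xs) (auto intro: invertible_el_mult invertible_elI[of 1 1])

lemma
  fixes m x y :: "'a::ring_1"
  assumes m: "invertible_el m" and x: "invertible_el x" and mxy: "m * x = y * m"
  shows intertwining_invertible: "invertible_el y"
    and intertwining_ring_inv: "m * ring_inv x = ring_inv y * m"
proof -
  let ?mi = "ring_inv m" and ?xi = "ring_inv x"
  have "m * x * ?mi = y * (m * ?mi)"
    by (simp add: mxy flip: mult.assoc)
  then have y: "y = m * x * ?mi"
    using m by (simp add: right_ring_inv)
  have "y * (m * ?xi * ?mi) = 1" "(m * ?xi * ?mi) * y = 1"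
    unfolding y using m x
    by (simp_all add: mult.assoc right_ring_inv mult_ring_inv_cancel ring_inv_mult_cancel)
  then have "invertible_el y" "ring_inv y = m * ?xi * ?mi"
    by (auto intro: invertible_elI ring_inv_unique)
  then show "invertible_el y" "m * ?xi = ring_inv y * m"
    using m by (simp_all add: mult.assoc left_ring_inv)
qed

lemma intertwining_by_ring_inv:
  fixes m x y :: "'a::ring_1"
  assumes "invertible_el m" "m * x = y * m"
  shows "ring_inv m * y = x * ring_inv m"
proof -
  have "ring_inv m * y = ring_inv m * (y * m) * ring_inv m"
    using assms(1) by (simp add: mult.assoc right_ring_inv)
  also have "\<dots> = (ring_inv m * m) * x * ring_inv m"
    by (metis assms(2) mult.assoc)
  also have "\<dots> = x * ring_inv m"
    using assms(1) by (simp add: left_ring_inv)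
  finally show ?thesis .
qed

lemma intertwining_prod_list:
  fixes m :: "'a::ring_1"
  assumes "\<And>k. k \<in> set xs \<Longrightarrow> m * f k = g k * m"
  shows "m * prod_list (map f xs) = prod_list (map g xs) * m"
  using assms
proof (induction xs)
  case (Cons k xs)
  have "m * prod_list (map f (k # xs)) = g k * (m * prod_list (map f xs))"
    using Cons.prems by (simp flip: mult.assoc)
  also have "\<dots> = prod_list (map g (k # xs)) * m"
    using Cons by (simp add: mult.assoc)
  finally show ?case .
qed simp

lemma intertwining_mult:
  fixes m b b' :: "'a::ring_1"
  assumes "m * b = b' * m"
  shows "a * m * (b * c) = a * b' * (m * c)"
  by (metis assms mult.assoc)

lemma ring_inv_commute_ring_inv:
  fixes x y :: "'a::ring_1"
  assumes "invertible_el x" "invertible_el y" "x * y = y * x"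
  shows "ring_inv x * ring_inv y = ring_inv y * ring_inv x"
  using assms by (metis ring_inv_commute)

lemma prod_list_filter_extract:
  fixes f :: "'b \<Rightarrow> 'a::monoid_mult"
  assumes "distinct xs" "j \<in> set xs" "j \<notin> X" "\<And>k. k \<in> set xs \<Longrightarrow> f j * f k = f k * f j"
  shows "prod_list (map f (filter (\<lambda>k. k \<notin> X) xs))
    = f j * prod_list (map f (filter (\<lambda>k. k \<notin> insert j X) xs))"
  using assms
proof (induction xs)
  case (Cons y xs)
  show ?case
  proof (cases "y = j")
    case True
    with Cons.prems have "filter (\<lambda>k. k \<notin> insert j X) xs = filter (\<lambda>k. k \<notin> X) xs"
      by (auto intro: filter_cong)
    with True Cons.prems show ?thesis by simp
  next
    case False
    with Cons have IH: "prod_list (map f (filter (\<lambda>k. k \<notin> X) xs))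
        = f j * prod_list (map f (filter (\<lambda>k. k \<notin> insert j X) xs))"
      by simp
    have "f y * (f j * z) = f j * (f y * z)" for z
      using Cons.prems(4)[of y] by (simp flip: mult.assoc)
    with False IH show ?thesis by simp
  qed
qed simp

lemma add_mult_add_commute:
  fixes a b c d :: "'a::ring_1"
  assumes "a * c = c * a" "a * d + b * c = c * b + d * a" "b * d = d * b"
  shows "(a + b) * (c + d) = (c + d) * (a + b)"
proof -
  have "(a + b) * (c + d) = a * c + (a * d + b * c) + b * d"
    by (simp add: algebra_simps)
  also have "\<dots> = c * a + (c * b + d * a) + d * b"
    using assms by simp
  also have "\<dots> = (c + d) * (a + b)"
    by (simp add: algebra_simps)
  finally show ?thesis .
qed

lemma sum_mult_sum_commute:
  fixes f g :: "'i \<Rightarrow> 'a::ring_1"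
  assumes "finite I"
    and "\<And>s. s \<in> I \<Longrightarrow> f s * g s = g s * f s"
    and "\<And>s t. s \<in> I \<Longrightarrow> t \<in> I \<Longrightarrow> s \<noteq> t \<Longrightarrow> f s * g t + f t * g s = g s * f t + g t * f s"
  shows "sum f I * sum g I = sum g I * sum f I"
  using assms
proof (induction I rule: finite_induct)
  case (insert x I)
  have "f x * sum g I + sum f I * g x = g x * sum f I + sum g I * f x"
    unfolding sum_distrib_left sum_distrib_right sum.distrib[symmetric]
    using insert by (intro sum.cong) auto
  with insert show ?case
    by (simp add: add_mult_add_commute)
qed simp

section \<open>Commutants\<close>

definition commutant :: "'a::ring_1 set \<Rightarrow> 'a set" where
  "commutant A = {x. \<forall>a\<in>A. x * a = a * x}"

lemma commutantI: "(\<And>a. a \<in> A \<Longrightarrow> x * a = a * x) \<Longrightarrow> x \<in> commutant A"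
  unfolding commutant_def by blast

lemma commutantD: "x \<in> commutant A \<Longrightarrow> a \<in> A \<Longrightarrow> x * a = a * x"
  unfolding commutant_def by blast

lemma commutant_antimono: "A \<subseteq> B \<Longrightarrow> commutant B \<subseteq> commutant A"
  unfolding commutant_def by blast

lemma subset_commutant_commutant: "A \<subseteq> commutant (commutant A)"
  unfolding commutant_def by auto

lemma commutant_commutant_commutative:
  assumes "A \<subseteq> commutant A"
  shows "commutant (commutant A) \<subseteq> commutant (commutant (commutant A))"
  using commutant_antimono[OF assms] by (rule commutant_antimono)

lemma commuting_set_commute:
  assumes "X \<subseteq> commutant X" "x \<in> X" "y \<in> X"
  shows "x * y = y * x" "x * (y * z) = y * (x * z)"
proof -
  show xy: "x * y = y * x"
    using assms commutantD by blast
  show "x * (y * z) = y * (x * z)"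
    by (simp add: xy flip: mult.assoc)
qed

lemma one_in_commutant: "1 \<in> commutant A"
  by (simp add: commutant_def)

lemma zero_in_commutant: "0 \<in> commutant A"
  by (simp add: commutant_def)

lemma add_in_commutant: "x \<in> commutant A \<Longrightarrow> y \<in> commutant A \<Longrightarrow> x + y \<in> commutant A"
  by (simp add: commutant_def algebra_simps)

lemma diff_in_commutant: "x \<in> commutant A \<Longrightarrow> y \<in> commutant A \<Longrightarrow> x - y \<in> commutant A"
  by (simp add: commutant_def algebra_simps)

lemma mult_in_commutant:
  assumes "x \<in> commutant A" "y \<in> commutant A"
  shows "x * y \<in> commutant A"
proof (rule commutantI)
  fix a assume "a \<in> A"
  with assms have "x * a = a * x" "y * a = a * y" by (simp_all add: commutantD)
  then show "x * y * a = a * (x * y)" by (metis mult.assoc)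
qed

lemma ring_inv_in_commutant: "x \<in> commutant A \<Longrightarrow> invertible_el x \<Longrightarrow> ring_inv x \<in> commutant A"
  by (metis commutantD commutantI ring_inv_commute)

lemma sum_in_commutant: "(\<And>k. k \<in> K \<Longrightarrow> f k \<in> commutant A) \<Longrightarrow> sum f K \<in> commutant A"
  by (induction K rule: infinite_finite_induct) (auto intro: zero_in_commutant add_in_commutant)

lemma prod_list_in_commutant:
  "(\<And>k. k \<in> set xs \<Longrightarrow> f k \<in> commutant A) \<Longrightarrow> prod_list (map f xs) \<in> commutant A"
  by (induction xs) (auto intro: one_in_commutant mult_in_commutant)

text \<open>
  With \<open>Z, W\<close> for \<open>z, w\<close>, \<open>Rz = \<Prod>\<^sub>k\<^sub>\<noteq>\<^sub>i\<^sub>,\<^sub>j (z - \<lambda>\<^sub>k)\<close>, \<open>ei = (\<Prod>\<^sub>k\<^sub>\<noteq>\<^sub>i\<^sub>,\<^sub>j (\<lambda>\<^sub>i - \<lambda>\<^sub>k))\<^sup>-\<^sup>1\<close>, and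
  \<open>A, B\<close> the rescaled \<open>\<lambda>\<^sub>i, \<lambda>\<^sub>j\<close>, the two summands are \<open>S\<^sub>i(z) S\<^sub>j'(w)\<close> and \<open>S\<^sub>j(z) S\<^sub>i''(w)\<close>.
\<close>

lemma lagrange_cross_identity:
  fixes Z W li lj A B Rz Rw ei ej u v p r :: "'a::ring_1"
  defines "X \<equiv> {Z, W, li, lj, A, B, Rz, Rw, ei, ej, u, v, p, r}"
  assumes X: "X \<subseteq> commutant X"
    and u: "u * (li - lj) = 1" and v: "v * (lj - li) = 1"
    and p: "p * (lj - A) = 1" and r: "r * (li - B) = 1"
  shows "(Z - lj) * Rz * (ei * u) * ((W - A) * Rw * (ej * p))
         + (Z - li) * Rz * (ej * v) * ((W - B) * Rw * (ei * r))
       = (W - lj) * Rw * (ei * u) * ((Z - A) * Rz * (ej * p))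
         + (W - li) * Rw * (ej * v) * ((Z - B) * Rz * (ei * r))"
proof -
  note comm = commuting_set_commute[OF X, unfolded X_def]
  have "v = v * (u * (li - lj))" using u by simp
  also have "\<dots> = - (u * (v * (lj - li)))" by (simp add: algebra_simps comm)
  finally have v_eq: "v = - u" using v by simp
  define K where "K = Rz * Rw * ei * ej * u"
  have "(Z - lj) * Rz * (ei * u) * ((W - A) * Rw * (ej * p))
        - (W - lj) * Rw * (ei * u) * ((Z - A) * Rz * (ej * p)) = K * (p * (lj - A)) * (Z - W)"
    unfolding K_def by (simp add: algebra_simps comm)
  also have "\<dots> = K * (Z - W)"
    using p by simp
  finally have ij: "(Z - lj) * Rz * (ei * u) * ((W - A) * Rw * (ej * p))
        - (W - lj) * Rw * (ei * u) * ((Z - A) * Rz * (ej * p)) = K * (Z - W)" .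
  have "(Z - li) * Rz * (ej * v) * ((W - B) * Rw * (ei * r))
        - (W - li) * Rw * (ej * v) * ((Z - B) * Rz * (ei * r)) = - (K * (r * (li - B)) * (Z - W))"
    unfolding K_def v_eq by (simp add: algebra_simps comm)
  also have "\<dots> = - (K * (Z - W))"
    using r by simp
  finally have ji: "(Z - li) * Rz * (ej * v) * ((W - B) * Rw * (ei * r))
        - (W - li) * Rw * (ej * v) * ((Z - B) * Rz * (ei * r)) = - (K * (Z - W))" .
  have "a + c = b + d" if "a - b = e" "c - d = - e" for a b c d e :: 'a
    using that by (simp add: algebra_simps)
  from this[OF ij ji] show ?thesis .
qed

lemma poly_part_identity:
  fixes Z W l A t Nz Nw d :: "'a::ring_1"
  defines "X \<equiv> {Z, W, l, A, t, Nz, Nw, d}"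
  assumes X: "X \<subseteq> commutant X"
  shows "(Z + (l + t)) * ((Z - l) * Nz) * (Nw * d) + Nz * d * ((W + (A + t)) * ((W - A) * Nw))
       = (W + (l + t)) * ((W - l) * Nw) * (Nz * d) + Nw * d * ((Z + (A + t)) * ((Z - A) * Nz))"
  by (simp add: algebra_simps commuting_set_commute[OF X, unfolded X_def])

section \<open>Lagrange basis at commuting nodes\<close>

locale lagrange_nodes =
  fixes sc :: "complex \<Rightarrow> 'a::ring_1" and n :: nat and lam :: "nat \<Rightarrow> 'a"
  assumes sc_hom: "central_scalar_hom sc"
    and lam_commute: "\<And>i k. i < n \<Longrightarrow> k < n \<Longrightarrow> lam i * lam k = lam k * lam i"
    and invertible_lam_diff:
      "\<And>i k. i < n \<Longrightarrow> k < n \<Longrightarrow> i \<noteq> k \<Longrightarrow> invertible_el (lam i - lam k)"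
begin

abbreviation S :: "(nat \<Rightarrow> 'a) \<Rightarrow> nat \<Rightarrow> complex \<Rightarrow> 'a" where
  "S L i z \<equiv> S_poly sc n L i z"

lemma sc_central: "sc x * a = a * sc x"
  and sc_one: "sc 1 = 1"
  and sc_mult: "sc (x * y) = sc x * sc y"
  using sc_hom unfolding central_scalar_hom_def by blast+

text \<open>The algebra of functions of the nodes, realised as the double commutant of the \<open>\<lambda>\<^sub>k\<close>.\<close>

definition lam_alg :: "'a set" where
  "lam_alg = commutant (commutant (lam ` {..<n}))"

lemma lam_alg_commutative: "lam_alg \<subseteq> commutant lam_alg"
  unfolding lam_alg_def
  by (rule commutant_commutant_commutative) (auto intro: commutantI lam_commute)

lemma lam_alg_commute: "x \<in> lam_alg \<Longrightarrow> y \<in> lam_alg \<Longrightarrow> x * y = y * x"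
  using lam_alg_commutative commutantD by blast

lemma commuting_subset_lam_alg: "X \<subseteq> lam_alg \<Longrightarrow> X \<subseteq> commutant X"
  using lam_alg_commutative commutant_antimono by (meson order_trans)

lemma lam_in_lam_alg: "k < n \<Longrightarrow> lam k \<in> lam_alg"
  unfolding lam_alg_def by (rule subset_commutant_commutant[THEN subsetD]) simp

lemma sc_in_lam_alg: "sc x \<in> lam_alg"
  unfolding lam_alg_def by (rule commutantI) (rule sc_central)

lemmas lam_alg_intros = lam_in_lam_alg sc_in_lam_alg
  add_in_commutant[where A = "commutant (lam ` {..<n})", folded lam_alg_def]
  diff_in_commutant[where A = "commutant (lam ` {..<n})", folded lam_alg_def]
  mult_in_commutant[where A = "commutant (lam ` {..<n})", folded lam_alg_def]
  ring_inv_in_commutant[where A = "commutant (lam ` {..<n})", folded lam_alg_def]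
  sum_in_commutant[where A = "commutant (lam ` {..<n})", folded lam_alg_def]
  prod_list_in_commutant[where A = "commutant (lam ` {..<n})", folded lam_alg_def]

definition lam_scaled :: "nat \<Rightarrow> complex \<Rightarrow> nat \<Rightarrow> 'a" where
  "lam_scaled i a = lam(i := sc a * lam i)"

lemma lam_scaled_one: "lam_scaled i 1 = lam"
  by (simp add: lam_scaled_def sc_one)

definition admissible :: "(nat \<Rightarrow> 'a) \<Rightarrow> bool" where
  "admissible L \<longleftrightarrow>
    (\<forall>k<n. L k \<in> lam_alg) \<and> (\<forall>k<n. \<forall>l<n. k \<noteq> l \<longrightarrow> invertible_el (L k - L l))"

lemma admissible_lam: "admissible lam"
  unfolding admissible_def using lam_in_lam_alg invertible_lam_diff by blast

lemma admissible_in_lam_alg: "admissible L \<Longrightarrow> k < n \<Longrightarrow> L k \<in> lam_alg"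
  by (simp add: admissible_def)

definition nodes_prod :: "(nat \<Rightarrow> 'a) \<Rightarrow> nat set \<Rightarrow> 'a \<Rightarrow> 'a" where
  "nodes_prod L X x = prod_list (map (\<lambda>k. x - L k) (filter (\<lambda>k. k \<notin> X) [0..<n]))"

definition poly_part :: "(nat \<Rightarrow> 'a) \<Rightarrow> complex \<Rightarrow> 'a" where
  "poly_part L z = (sc z + (\<Sum>k<n. L k)) * nodes_prod L {} (sc z)"

lemma S_poly_nodes_prod: "S L i z = nodes_prod L {i} (sc z) * ring_inv (nodes_prod L {i} (L i))"
  unfolding S_poly_def nodes_prod_def by simp

lemma nodes_prod_in_lam_alg: "admissible L \<Longrightarrow> x \<in> lam_alg \<Longrightarrow> nodes_prod L X x \<in> lam_alg"
  unfolding nodes_prod_def admissible_def by (auto intro!: lam_alg_intros)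

lemma invertible_nodes_prod:
  assumes "admissible L" "i < n" "i \<in> X"
  shows "invertible_el (nodes_prod L X (L i))"
  unfolding nodes_prod_def
proof (rule invertible_el_prod_list)
  fix k assume "k \<in> set (filter (\<lambda>k. k \<notin> X) [0..<n])"
  with assms(3) have "k < n" "i \<noteq> k" by auto
  with assms(1,2) show "invertible_el (L i - L k)" by (simp add: admissible_def)
qed

lemma poly_part_in_lam_alg: "admissible L \<Longrightarrow> poly_part L z \<in> lam_alg"
  unfolding poly_part_def
  by (intro lam_alg_intros nodes_prod_in_lam_alg) (auto simp: admissible_def)

lemma nodes_prod_extract:
  assumes "admissible L" "x \<in> lam_alg" "j < n" "j \<notin> X"
  shows "nodes_prod L X x = (x - L j) * nodes_prod L (insert j X) x"
  unfolding nodes_prod_def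
  using assms
  by (intro prod_list_filter_extract)
    (auto simp: admissible_def intro!: lam_alg_commute lam_alg_intros)

lemma nodes_prod_cong:
  "(\<And>k. k < n \<Longrightarrow> k \<notin> X \<Longrightarrow> L k = L' k) \<Longrightarrow> nodes_prod L X x = nodes_prod L' X x"
  unfolding nodes_prod_def by (intro arg_cong[where f = prod_list] map_cong) auto

lemma nodes_prod_intertwining:
  assumes "\<And>k. k < n \<Longrightarrow> m * L k = L' k * m" "m * x = x' * m"
  shows "m * nodes_prod L X x = nodes_prod L' X x' * m"
  unfolding nodes_prod_def using assms by (intro intertwining_prod_list) (simp add: algebra_simps)

lemma S_intertwining:
  assumes L: "admissible L" and m: "invertible_el m"
    and mL: "\<And>k. k < n \<Longrightarrow> m * L k = L' k * m" and j: "j < n"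
  shows "m * S L j z = S L' j z * m"
proof -
  have num: "m * nodes_prod L {j} (sc z) = nodes_prod L' {j} (sc z) * m"
    using mL by (intro nodes_prod_intertwining) (simp_all add: sc_central)
  have "m * nodes_prod L {j} (L j) = nodes_prod L' {j} (L' j) * m"
    using mL j by (intro nodes_prod_intertwining) simp_all
  then have den: "m * ring_inv (nodes_prod L {j} (L j)) = ring_inv (nodes_prod L' {j} (L' j)) * m"
    using m invertible_nodes_prod[OF L j] by (intro intertwining_ring_inv) simp_all
  have "m * S L j z = (m * nodes_prod L {j} (sc z)) * ring_inv (nodes_prod L {j} (L j))"
    by (simp add: S_poly_nodes_prod mult.assoc)
  also have "\<dots> = nodes_prod L' {j} (sc z) * (m * ring_inv (nodes_prod L {j} (L j)))"
    by (simp add: num mult.assoc)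
  also have "\<dots> = S L' j z * m"
    by (simp add: den S_poly_nodes_prod mult.assoc)
  finally show ?thesis .
qed

lemma poly_part_intertwining:
  assumes mL: "\<And>k. k < n \<Longrightarrow> m * L k = L' k * m"
  shows "m * poly_part L z = poly_part L' z * m"
proof -
  have "m * (sc z + (\<Sum>k<n. L k)) = (sc z + (\<Sum>k<n. L' k)) * m"
    using mL by (simp add: algebra_simps sum_distrib_left sum_distrib_right sc_central)
  moreover have "m * nodes_prod L {} (sc z) = nodes_prod L' {} (sc z) * m"
    using mL by (intro nodes_prod_intertwining) (simp_all add: sc_central)
  ultimately show ?thesis
    unfolding poly_part_def by (metis mult.assoc)
qed

definition rescales :: "'a \<Rightarrow> nat \<Rightarrow> complex \<Rightarrow> bool" where
  "rescales m i a \<longleftrightarrow> invertible_el m \<and> (\<forall>k<n. m * lam k = lam_scaled i a k * m)"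

lemma admissible_lam_scaled:
  assumes "rescales m i a"
  shows "admissible (lam_scaled i a)"
  unfolding admissible_def
proof (intro conjI allI impI)
  fix k assume "k < n"
  then show "lam_scaled i a k \<in> lam_alg"
    by (auto simp: lam_scaled_def intro!: lam_alg_intros)
next
  fix k l assume kl: "k < n" "l < n" "k \<noteq> l"
  have "m * lam k = lam_scaled i a k * m" "m * lam l = lam_scaled i a l * m"
    using assms kl by (simp_all add: rescales_def)
  then have "m * (lam k - lam l) = (lam_scaled i a k - lam_scaled i a l) * m"
    by (simp only: right_diff_distrib left_diff_distrib)
  with assms invertible_lam_diff[OF kl] show "invertible_el (lam_scaled i a k - lam_scaled i a l)"
    unfolding rescales_def by (blast intro: intertwining_invertible)
qed

lemma rescales_ring_inv:
  assumes m: "rescales m i a" and a: "a \<noteq> 0"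
  shows "rescales (ring_inv m) i (1 / a)"
  unfolding rescales_def
proof (intro conjI allI impI)
  have inv: "invertible_el m" using m by (simp add: rescales_def)
  then show "invertible_el (ring_inv m)" by (rule invertible_el_ring_inv)
  fix k assume k: "k < n"
  have mk: "ring_inv m * lam_scaled i a k = lam k * ring_inv m"
    using m k by (intro intertwining_by_ring_inv) (simp_all add: rescales_def)
  show "ring_inv m * lam k = lam_scaled i (1 / a) k * ring_inv m"
  proof (cases "k = i")
    case True
    have "sc (1 / a) * sc a = 1" using a by (simp flip: sc_mult add: sc_one)
    then have "ring_inv m * lam k = sc (1 / a) * (ring_inv m * (sc a * lam k))"
      by (metis mult.assoc mult_1 sc_central)
    also have "\<dots> = lam_scaled i (1 / a) k * ring_inv m"
      using mk True by (simp add: lam_scaled_def mult.assoc)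
    finally show ?thesis .
  next
    case False
    then show ?thesis using mk by (simp add: lam_scaled_def)
  qed
qed

lemma nodes_prod_lam_scaled:
  assumes L: "admissible (lam_scaled i a)" and "i < n" "i \<notin> X" "x \<in> lam_alg"
  shows "nodes_prod (lam_scaled i a) X x = (x - sc a * lam i) * nodes_prod lam (insert i X) x"
proof -
  have "nodes_prod (lam_scaled i a) X x
      = (x - lam_scaled i a i) * nodes_prod (lam_scaled i a) (insert i X) x"
    using assms by (intro nodes_prod_extract)
  also have "nodes_prod (lam_scaled i a) (insert i X) x = nodes_prod lam (insert i X) x"
    by (rule nodes_prod_cong) (simp add: lam_scaled_def)
  also have "lam_scaled i a i = sc a * lam i"
    by (simp add: lam_scaled_def)
  finally show ?thesis .
qed

lemma invertible_lam_scaled_diff: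
  assumes "admissible (lam_scaled i a)" "i < n" "j < n" "i \<noteq> j"
  shows "invertible_el (lam j - sc a * lam i)"
proof -
  have "invertible_el (lam_scaled i a j - lam_scaled i a i)"
    using assms unfolding admissible_def by blast
  with assms(4) show ?thesis by (simp add: lam_scaled_def)
qed

lemma S_lam_scaled:
  assumes L: "admissible (lam_scaled i a)" and ij: "i < n" "j < n" "i \<noteq> j"
  shows "S (lam_scaled i a) j z = (sc z - sc a * lam i) * nodes_prod lam {i, j} (sc z)
    * (ring_inv (nodes_prod lam {i, j} (lam j)) * ring_inv (lam j - sc a * lam i))"
proof -
  have Lj: "lam_scaled i a j = lam j"
    using ij by (simp add: lam_scaled_def)
  have den: "nodes_prod (lam_scaled i a) {j} (lam j)
      = (lam j - sc a * lam i) * nodes_prod lam {i, j} (lam j)"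
    using assms by (intro nodes_prod_lam_scaled) (auto intro: lam_alg_intros)
  have "invertible_el (lam j - sc a * lam i)"
    using assms by (rule invertible_lam_scaled_diff)
  moreover have "invertible_el (nodes_prod lam {i, j} (lam j))"
    using ij by (intro invertible_nodes_prod admissible_lam) auto
  ultimately show ?thesis
    unfolding S_poly_nodes_prod Lj den using assms
    by (simp add: nodes_prod_lam_scaled sc_in_lam_alg ring_inv_mult mult.assoc)
qed

lemma S_factor:
  assumes "i < n" "j < n" "i \<noteq> j"
  shows "S lam j z = (sc z - lam i) * nodes_prod lam {i, j} (sc z)
    * (ring_inv (nodes_prod lam {i, j} (lam j)) * ring_inv (lam j - lam i))"
proof -
  have "S (lam_scaled i 1) j z = (sc z - sc 1 * lam i) * nodes_prod lam {i, j} (sc z)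
    * (ring_inv (nodes_prod lam {i, j} (lam j)) * ring_inv (lam j - sc 1 * lam i))"
    by (rule S_lam_scaled) (simp_all add: assms lam_scaled_one admissible_lam)
  then show ?thesis
    by (simp only: lam_scaled_one sc_one mult_1_left)
qed

lemma S_cross_symmetric:
  assumes ij: "i < n" "j < n" "i \<noteq> j"
    and La: "admissible (lam_scaled i a)" and Lb: "admissible (lam_scaled j b)"
  shows "S lam i z * S (lam_scaled i a) j w + S lam j z * S (lam_scaled j b) i w
       = S lam i w * S (lam_scaled i a) j z + S lam j w * S (lam_scaled j b) i z"
proof -
  have inv: "invertible_el (lam i - lam j)" "invertible_el (lam j - lam i)"
    "invertible_el (lam j - sc a * lam i)" "invertible_el (lam i - sc b * lam j)"
    "invertible_el (nodes_prod lam {i, j} (lam i))" "invertible_el (nodes_prod lam {i, j} (lam j))"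
    using ij La Lb
    by (simp_all add: invertible_lam_diff invertible_lam_scaled_diff
        invertible_nodes_prod admissible_lam)
  let ?X = "{sc z, sc w, lam i, lam j, sc a * lam i, sc b * lam j, nodes_prod lam {i, j} (sc z),
    nodes_prod lam {i, j} (sc w), ring_inv (nodes_prod lam {i, j} (lam i)),
    ring_inv (nodes_prod lam {i, j} (lam j)), ring_inv (lam i - lam j), ring_inv (lam j - lam i),
    ring_inv (lam j - sc a * lam i), ring_inv (lam i - sc b * lam j)}"
  have "?X \<subseteq> lam_alg"
    using ij inv by (simp add: lam_alg_intros nodes_prod_in_lam_alg admissible_lam)
  then have "?X \<subseteq> commutant ?X"
    by (rule commuting_subset_lam_alg)
  then show ?thesis
    unfolding S_factor[OF ij(2,1) not_sym[OF ij(3)]] S_factor[OF ij]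
      S_lam_scaled[OF La ij] S_lam_scaled[OF Lb ij(2,1) not_sym[OF ij(3)]] insert_commute[of j i]
    by (rule lagrange_cross_identity) (simp_all add: inv left_ring_inv)
qed

lemma S_scaled_symmetric:
  assumes i: "i < n" and La: "admissible (lam_scaled i a)"
  shows "S lam i z * S (lam_scaled i a) i w = S lam i w * S (lam_scaled i a) i z"
proof -
  have num: "nodes_prod (lam_scaled i a) {i} x = nodes_prod lam {i} x" for x
    by (rule nodes_prod_cong) (simp add: lam_scaled_def)
  have "invertible_el (nodes_prod lam {i} (lam_scaled i a i))"
    using invertible_nodes_prod[OF La i, of "{i}"] by (simp add: num)
  then have "{nodes_prod lam {i} (sc z), nodes_prod lam {i} (sc w),
      ring_inv (nodes_prod lam {i} (lam i)), ring_inv (nodes_prod lam {i} (lam_scaled i a i))}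
      \<subseteq> lam_alg"
    using i admissible_in_lam_alg[OF La i]
    by (auto intro!: lam_alg_intros nodes_prod_in_lam_alg invertible_nodes_prod admissible_lam)
  note comm = commuting_set_commute[OF commuting_subset_lam_alg[OF this]]
  show ?thesis
    unfolding S_poly_nodes_prod num by (simp add: mult.assoc comm)
qed

lemma poly_part_lam_scaled:
  assumes "admissible (lam_scaled i a)" "i < n"
  shows "poly_part (lam_scaled i a) z
    = (sc z + (sc a * lam i + (\<Sum>k\<in>{..<n} - {i}. lam k)))
      * ((sc z - sc a * lam i) * nodes_prod lam {i} (sc z))"
proof -
  have "(\<Sum>k<n. lam_scaled i a k) = lam_scaled i a i + (\<Sum>k\<in>{..<n} - {i}. lam_scaled i a k)"
    using assms(2) by (simp add: sum.remove)
  also have "\<dots> = sc a * lam i + (\<Sum>k\<in>{..<n} - {i}. lam k)"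
    by (simp add: lam_scaled_def)
  finally show ?thesis
    unfolding poly_part_def using assms by (simp add: nodes_prod_lam_scaled sc_in_lam_alg)
qed

lemma poly_part_S_symmetric:
  assumes i: "i < n" and La: "admissible (lam_scaled i a)"
  shows "poly_part lam z * S lam i w + S lam i z * poly_part (lam_scaled i a) w
       = poly_part lam w * S lam i z + S lam i w * poly_part (lam_scaled i a) z"
proof -
  have F: "poly_part lam x = (sc x + (lam i + (\<Sum>k\<in>{..<n} - {i}. lam k)))
      * ((sc x - lam i) * nodes_prod lam {i} (sc x))" for x
    using poly_part_lam_scaled[of i 1 x] i by (simp add: lam_scaled_one admissible_lam sc_one)
  show ?thesis
    unfolding F poly_part_lam_scaled[OF La i] S_poly_nodes_prod
    by (rule poly_part_identity, rule commuting_subset_lam_alg)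
      (use i in \<open>auto intro!: lam_alg_intros nodes_prod_in_lam_alg
        invertible_nodes_prod admissible_lam\<close>)
qed

lemma poly_part_commute: "poly_part lam z * poly_part lam w = poly_part lam w * poly_part lam z"
  by (intro lam_alg_commute poly_part_in_lam_alg admissible_lam)

lemma S_pair_symmetric:
  assumes ij: "i < n" "j < n"
    and La: "admissible (lam_scaled i a)" and Lb: "admissible (lam_scaled j b)"
  shows "S lam i z * S (lam_scaled i a) j w + S lam j z * S (lam_scaled j b) i w
       = S lam i w * S (lam_scaled i a) j z + S lam j w * S (lam_scaled j b) i z"
proof (cases "i = j")
  case True
  then show ?thesis
    using S_scaled_symmetric[OF ij(1) La] S_scaled_symmetric[OF ij(1), of b] Lb by simp
next
  case False
  then show ?thesis using S_cross_symmetric[OF ij False La Lb] by simp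
qed

lemma rescales_S_intertwining:
  assumes "rescales m i a" "j < n"
  shows "m * S lam j x = S (lam_scaled i a) j x * m"
  using assms unfolding rescales_def by (blast intro: S_intertwining[OF admissible_lam])

lemma S_term_pair_symmetric:
  assumes ij: "i < n" "j < n" and m: "rescales m i a" and m': "rescales m' j b"
    and mm': "m * m' = m' * m"
  shows "S lam i z * m * (S lam j w * m') + S lam j z * m' * (S lam i w * m)
       = S lam i w * m * (S lam j z * m') + S lam j w * m' * (S lam i z * m)"
proof -
  have "S lam i x * m * (S lam j y * m') + S lam j x * m' * (S lam i y * m)
      = (S lam i x * S (lam_scaled i a) j y + S lam j x * S (lam_scaled j b) i y) * (m * m')" for x y
    using intertwining_mult[OF rescales_S_intertwining[OF m ij(2)], of "S lam i x" y m']
      intertwining_mult[OF rescales_S_intertwining[OF m' ij(1)], of "S lam j x" y m]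
    by (simp add: distrib_right mm')
  then show ?thesis
    using S_pair_symmetric[OF ij admissible_lam_scaled[OF m] admissible_lam_scaled[OF m']] by simp
qed

lemma S_term_square_commute:
  assumes i: "i < n" and m: "rescales m i a"
  shows "S lam i z * m * (S lam i w * m) = S lam i w * m * (S lam i z * m)"
  using intertwining_mult[OF rescales_S_intertwining[OF m i], of "S lam i x" y m for x y]
    S_scaled_symmetric[OF i admissible_lam_scaled[OF m]]
  by simp

lemma poly_part_S_term_symmetric:
  assumes i: "i < n" and m: "rescales m i a"
  shows "poly_part lam z * (S lam i w * m) + S lam i z * m * poly_part lam w
       = poly_part lam w * (S lam i z * m) + S lam i w * m * poly_part lam z"
proof -
  have "m * poly_part lam x = poly_part (lam_scaled i a) x * m" for x
    using m by (intro poly_part_intertwining) (simp add: rescales_def)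
  from intertwining_mult[OF this, of "S lam i x" y 1 for x y]
  have "poly_part lam x * (S lam i y * m) + S lam i x * m * poly_part lam y
      = (poly_part lam x * S lam i y + S lam i x * poly_part (lam_scaled i a) y) * m" for x y
    by (simp add: distrib_right mult.assoc)
  then show ?thesis
    using poly_part_S_symmetric[OF i admissible_lam_scaled[OF m]] by simp
qed

lemma poly_part_plus_S_terms_commute:
  fixes idx :: "'t \<Rightarrow> nat" and mult :: "'t \<Rightarrow> 'a" and scale :: "'t \<Rightarrow> complex"
  assumes "finite J" and idx: "\<And>t. t \<in> J \<Longrightarrow> idx t < n"
    and resc: "\<And>t. t \<in> J \<Longrightarrow> rescales (mult t) (idx t) (scale t)"
    and comm: "\<And>s t. s \<in> J \<Longrightarrow> t \<in> J \<Longrightarrow> mult s * mult t = mult t * mult s"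
  defines "G \<equiv> \<lambda>x. poly_part lam x + (\<Sum>t\<in>J. S lam (idx t) x * mult t)"
  shows "G z * G w = G w * G z"
  unfolding G_def
proof (rule add_mult_add_commute)
  show "poly_part lam z * poly_part lam w = poly_part lam w * poly_part lam z"
    by (rule poly_part_commute)
  show "poly_part lam z * (\<Sum>t\<in>J. S lam (idx t) w * mult t)
        + (\<Sum>t\<in>J. S lam (idx t) z * mult t) * poly_part lam w
      = poly_part lam w * (\<Sum>t\<in>J. S lam (idx t) z * mult t)
        + (\<Sum>t\<in>J. S lam (idx t) w * mult t) * poly_part lam z"
    unfolding sum_distrib_left sum_distrib_right sum.distrib[symmetric]
    using idx resc by (intro sum.cong refl poly_part_S_term_symmetric)
  show "(\<Sum>t\<in>J. S lam (idx t) z * mult t) * (\<Sum>t\<in>J. S lam (idx t) w * mult t)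
      = (\<Sum>t\<in>J. S lam (idx t) w * mult t) * (\<Sum>t\<in>J. S lam (idx t) z * mult t)"
    using assms(1) idx resc comm
    by (intro sum_mult_sum_commute S_term_square_commute S_term_pair_symmetric)
qed

end

theorem mainTheorem6:
  fixes sc :: "complex \<Rightarrow> 'a::ring_1"
    and n :: nat and q :: complex
    and lam mu :: "nat \<Rightarrow> 'a"
  assumes "n \<ge> 1" and "q \<noteq> 0"
    and "central_scalar_hom sc"
    and "\<And>i k. i < n \<Longrightarrow> k < n \<Longrightarrow> lam i * lam k = lam k * lam i"
    and "\<And>i k. i < n \<Longrightarrow> k < n \<Longrightarrow> i \<noteq> k \<Longrightarrow> invertible_el (lam i - lam k)"
    and "\<And>i k. i < n \<Longrightarrow> k < n \<Longrightarrow> mu i * mu k = mu k * mu i"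
    and "\<And>i. i < n \<Longrightarrow> invertible_el (mu i)"
    and "\<And>j. j < n \<Longrightarrow> mu j * lam j = sc q * lam j * mu j"
    and "\<And>i j. i < n \<Longrightarrow> j < n \<Longrightarrow> i \<noteq> j \<Longrightarrow> mu j * lam i = lam i * mu j"
  shows "\<forall>z w. P_op sc n lam mu z * P_op sc n lam mu w = P_op sc n lam mu w * P_op sc n lam mu z"
proof (intro allI)
  fix z w
  interpret lagrange_nodes sc n lam
    using assms(3-5) by unfold_locales
  define mult where "mult t = (if snd t then mu (fst t) else ring_inv (mu (fst t)))"
    for t :: "nat \<times> bool"
  define scale where "scale t = (if snd t then q else 1 / q)" for t :: "nat \<times> bool"
  define G where "G x = poly_part lam x + (\<Sum>t\<in>{..<n} \<times> UNIV. S lam (fst t) x * mult t)" for x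
  have mu_rescales: "rescales (mu i) i q" if "i < n" for i
    using assms(7-9) that by (auto simp: rescales_def lam_scaled_def)
  have "G z * G w = G w * G z"
    unfolding G_def
  proof (rule poly_part_plus_S_terms_commute)
    show "rescales (mult t) (fst t) (scale t)" if "t \<in> {..<n} \<times> UNIV" for t
      using that mu_rescales rescales_ring_inv[OF mu_rescales assms(2)]
      by (auto simp: mult_def scale_def)
    show "mult s * mult t = mult t * mult s"
      if "s \<in> {..<n} \<times> UNIV" "t \<in> {..<n} \<times> UNIV" for s t
      using that assms(6,7)
      by (auto simp: mult_def
          intro: ring_inv_commute ring_inv_commute[symmetric] ring_inv_commute_ring_inv)
  qed auto
  moreover have "P_op sc n lam mu x = sc (1 / 2) * G x" for x
    by (simp add: P_op_def G_def poly_part_def nodes_prod_def mult_def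
        sum.cartesian_product' UNIV_bool distrib_left add.commute)
  ultimately show "P_op sc n lam mu z * P_op sc n lam mu w = P_op sc n lam mu w * P_op sc n lam mu z"
    by (metis mult.assoc sc_central)
qed

end
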